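(* Let $h>0$, $N\in\mathbb{N}$, $\mu>0$, $\alpha,\beta\in[0,1/2]$, and let $L_d:\mathbb{R}^d\times\mathbb{R}^d\to\mathbb{R}$ be $C^1$. Let $\gamma(z)=\rho(z)/\sigma(z)$ with $\rho_0/\sigma_0>0$ (e.g. $\gamma=\gamma_p$, $\gamma_p(z)=\sum_{j=1}^p\frac1j(1-z)^j$) and for real $a$ let $\omega^{(a)}_n$ be the Taylor coefficients of $(\gamma(z)/h)^{-a}$; define $\mathcal{J}_{-}^{a}x_k=\sum_{n=0}^{k}\omega_n^{(a)}x_{k-n}$, $\mathcal{J}_{+}^{a}y_k=\sum_{n=0}^{N-k}\omega_n^{(a)}y_{k+n}$. For sequences $x_d=(x_k)_{k=0}^N$, $y_d=(y_k)_{k=0}^N$ in $\mathbb{R}^d$ define the discrete action $$\mathcal{S}_d(x_d,y_d)=\sum_{k=0}^{N-1}\big(L_d(x_k,x_{k+1})+L_d(y_k,y_{k+1})\big)-\mu h\sum_{k=0}^{N}\mathcal{J}_{-}^{-\alpha}x_k\cdot\mathcal{J}_{+}^{-\beta}y_k .$$ Suppose $x_d,y_d$ satisfy, for all $k=1,\dots,N-1$, $$D_1L_d(x_k,x_{k+1})+D_2L_d(x_{k-1},x_k)=\mu h\,\mathcal{J}_{-}^{-(\alpha+\beta)}x_k,\qquad D_1L_d(y_k,y_{k+1})+D_2L_d(y_{k-1},y_k)=\mu h\,\mathcal{J}_{+}^{-(\alpha+\beta)}y_k,$$ where $D_i$ denotes the gradient with respect to the $i$-th argument. Then $(x_d,y_d)$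 is an extremal of $\mathcal{S}_d$ under restricted variations: for every sequence $(\delta x_k)_{k=0}^N$ in $\mathbb{R}^d$ with $\delta x_0=\delta x_N=0$, $$\frac{d}{d\epsilon}\Big|_{\epsilon=0}\mathcal{S}_d\big((x_k+\epsilon\delta x_k)_k,(y_k+\epsilon\delta x_k)_k\big)=0.$$
   Context: Restricted variations: the same variation $\delta x$ is applied to both doubled variables $x$ and $y$. $\mathcal{J}^{-\alpha}_{\pm}$ are convolution-quadrature approximations of left/right Riemann–Liouville fractional derivatives; the choice $\gamma_1(z)=1-z$ gives Grünwald–Letnikov weights. *)

theory Defs
  imports "HOL-Analysis.Analysis" "HOL-Computational_Algebra.Polynomial"
begin

definition gamma_fun :: "real poly \<Rightarrow> real poly \<Rightarrow> real \<Rightarrow> real" where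
  "gamma_fun \<rho> \<sigma> z = poly \<rho> z / poly \<sigma> z"

definition omega :: "real poly \<Rightarrow> real poly \<Rightarrow> real \<Rightarrow> real \<Rightarrow> nat \<Rightarrow> real" where
  "omega \<rho> \<sigma> h a n =
     (deriv ^^ n) (\<lambda>z. (gamma_fun \<rho> \<sigma> z / h) powr (- a)) 0 / fact n"

definition Jminus :: "real poly \<Rightarrow> real poly \<Rightarrow> real \<Rightarrow> real \<Rightarrow> (nat \<Rightarrow> 'a::real_vector) \<Rightarrow> nat \<Rightarrow> 'a" where
  "Jminus \<rho> \<sigma> h a x k = (\<Sum>n=0..k. omega \<rho> \<sigma> h a n *\<^sub>R x (k - n))"

definition Jplus :: "real poly \<Rightarrow> real poly \<Rightarrow> real \<Rightarrow> nat \<Rightarrow> real \<Rightarrow> (nat \<Rightarrow> 'a::real_vector) \<Rightarrow> nat \<Rightarrow> 'a" where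
  "Jplus \<rho> \<sigma> h N a y k = (\<Sum>n=0..N - k. omega \<rho> \<sigma> h a n *\<^sub>R y (k + n))"

definition action :: "('a::euclidean_space \<Rightarrow> 'a \<Rightarrow> real) \<Rightarrow> real poly \<Rightarrow> real poly \<Rightarrow> real \<Rightarrow> nat
    \<Rightarrow> real \<Rightarrow> real \<Rightarrow> real \<Rightarrow> (nat \<Rightarrow> 'a) \<Rightarrow> (nat \<Rightarrow> 'a) \<Rightarrow> real" where
  "action L \<rho> \<sigma> h N \<mu> \<alpha> \<beta> x y =
     (\<Sum>k<N. L (x k) (x (Suc k)) + L (y k) (y (Suc k)))
     - \<mu> * h * (\<Sum>k=0..N. Jminus \<rho> \<sigma> h (- \<alpha>) x k \<bullet> Jplus \<rho> \<sigma> h N (- \<beta>) y k)"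

end

theory Submission
  imports Defs "HOL-Complex_Analysis.Complex_Analysis"
begin

text \<open>
  Along the restricted variation the derivative of the action splits into a Lagrangian part
  and a coupling part. Summation by parts and the discrete Euler--Lagrange equations turn the
  Lagrangian part into $\mu h \sum_k (J_-^{-(\alpha+\beta)} x_k + J_+^{-(\alpha+\beta)} y_k) \cdot \delta x_k$.
  The coupling part is the same expression, because $J_+^a$ is the adjoint of $J_-^a$ for the
  pairing $\sum_{k=0}^N u_k \cdot v_k$ and $J_-^b J_-^a = J_-^{a+b}$. The latter is the convolution
  identity $\omega^{(a+b)} = \omega^{(a)} * \omega^{(b)}$, i.e.\ the Leibniz rule for
  $(\gamma/h)^{-a} (\gamma/h)^{-b} = (\gamma/h)^{-(a+b)}$, obtained from a holomorphic extension of
  $\gamma$ near $0$, where $\gamma > 0$.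
\<close>

lemma sum_triangle_reindex_atMost:
  fixes k :: nat
  shows "(\<Sum>i\<le>k. \<Sum>j\<le>k - i. g i j) = (\<Sum>p\<le>k. \<Sum>i\<le>p. g i (p - i))"
proof -
  have "(\<Sum>i\<le>k. \<Sum>j\<le>k - i. g i j) = (\<Sum>(i, j)\<in>{(i, j). i + j \<le> k}. g i j)"
    by (subst sum.Sigma) (auto intro!: sum.cong simp: Sigma_def)
  also have "\<dots> = (\<Sum>p\<le>k. \<Sum>i\<le>p. g i (p - i))"
    by (rule sum.triangle_reindex_eq)
  finally show ?thesis .
qed

lemma Jminus_reversed: "Jminus \<rho> \<sigma> h a x k = (\<Sum>i\<le>k. omega \<rho> \<sigma> h a (k - i) *\<^sub>R x i)"
  unfolding Jminus_def by (subst sum.atLeastAtMost_rev) (auto simp: atLeast0AtMost intro!: sum.cong)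

lemma sum_inner_Jplus:
  "(\<Sum>k=0..N. u k \<bullet> Jplus \<rho> \<sigma> h N a v k) = (\<Sum>k=0..N. Jminus \<rho> \<sigma> h a u k \<bullet> v k)"
proof -
  have "(\<Sum>k=0..N. u k \<bullet> Jplus \<rho> \<sigma> h N a v k)
      = (\<Sum>k\<le>N. \<Sum>n\<le>N - k. omega \<rho> \<sigma> h a n * (u k \<bullet> v (k + n)))"
    by (simp add: Jplus_def inner_sum_right atLeast0AtMost)
  also have "\<dots> = (\<Sum>p\<le>N. \<Sum>k\<le>p. omega \<rho> \<sigma> h a (p - k) * (u k \<bullet> v p))"
    by (simp add: sum_triangle_reindex_atMost)
  also have "\<dots> = (\<Sum>p=0..N. Jminus \<rho> \<sigma> h a u p \<bullet> v p)"
    by (simp add: Jminus_reversed inner_sum_left atLeast0AtMost)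
  finally show ?thesis .
qed

lemma Jminus_Jminus_conv:
  "Jminus \<rho> \<sigma> h b (Jminus \<rho> \<sigma> h a x) k
     = (\<Sum>p=0..k. (\<Sum>i=0..p. omega \<rho> \<sigma> h b i * omega \<rho> \<sigma> h a (p - i)) *\<^sub>R x (k - p))"
proof -
  have "Jminus \<rho> \<sigma> h b (Jminus \<rho> \<sigma> h a x) k
      = (\<Sum>i\<le>k. \<Sum>j\<le>k - i. (omega \<rho> \<sigma> h b i * omega \<rho> \<sigma> h a j) *\<^sub>R x (k - i - j))"
    by (simp add: Jminus_def scaleR_sum_right atLeast0AtMost)
  also have "\<dots> = (\<Sum>p\<le>k. \<Sum>i\<le>p. (omega \<rho> \<sigma> h b i * omega \<rho> \<sigma> h a (p - i)) *\<^sub>R x (k - p))"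
    by (subst sum_triangle_reindex_atMost) (auto intro!: sum.cong)
  finally show ?thesis
    by (simp add: atLeast0AtMost scaleR_sum_left)
qed

lemma higher_deriv_of_real:
  fixes F :: "complex \<Rightarrow> complex" and f :: "real \<Rightarrow> real"
  assumes holF: "F holomorphic_on S" and "open S" "open T"
    and TS: "\<And>t. t \<in> T \<Longrightarrow> complex_of_real t \<in> S"
    and F_f: "\<And>t. t \<in> T \<Longrightarrow> F (of_real t) = of_real (f t)"
    and "x \<in> T"
  shows "(deriv ^^ n) F (of_real x) = of_real ((deriv ^^ n) f x)"
  using \<open>x \<in> T\<close>
proof (induction n arbitrary: x)
  case 0
  then show ?case using F_f by simp
next
  case (Suc n x)
  define c where "c = deriv ((deriv ^^ n) F) (of_real x)"
  have "((deriv ^^ n) F has_field_derivative c) (at (of_real x))"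
    unfolding c_def using holomorphic_higher_deriv[OF holF \<open>open S\<close>] \<open>open S\<close> TS[OF Suc.prems]
    by (rule holomorphic_derivI)
  then have "((\<lambda>t. (deriv ^^ n) F (of_real t)) has_vector_derivative c) (at x)"
    by (rule has_vector_derivative_real_field)
  then have Re: "((\<lambda>t. Re ((deriv ^^ n) F (of_real t))) has_field_derivative Re c) (at x)"
    and Im: "((\<lambda>t. Im ((deriv ^^ n) F (of_real t))) has_field_derivative Im c) (at x)"
    by (auto intro: has_field_derivative_Re has_field_derivative_Im)
  have "((deriv ^^ n) f has_field_derivative Re c) (at x)"
    by (rule has_field_derivative_transform_within_open[OF Re \<open>open T\<close> Suc.prems])
       (simp add: Suc.IH)
  moreover have "((\<lambda>t. 0) has_field_derivative Im c) (at x)"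
    by (rule has_field_derivative_transform_within_open[OF Im \<open>open T\<close> Suc.prems])
       (simp add: Suc.IH)
  then have "Im c = 0"
    using DERIV_unique DERIV_const by blast
  ultimately show ?case
    by (simp add: c_def DERIV_imp_deriv complex_eq_iff)
qed

lemma higher_deriv_mult_of_real:
  fixes F G :: "complex \<Rightarrow> complex" and f g :: "real \<Rightarrow> real"
  assumes "F holomorphic_on S" "G holomorphic_on S" "open S" "open T"
    and TS: "\<And>t. t \<in> T \<Longrightarrow> complex_of_real t \<in> S"
    and F_f: "\<And>t. t \<in> T \<Longrightarrow> F (of_real t) = of_real (f t)"
    and G_g: "\<And>t. t \<in> T \<Longrightarrow> G (of_real t) = of_real (g t)"
    and "x \<in> T"
  shows "(deriv ^^ n) (\<lambda>t. f t * g t) x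
           = (\<Sum>i=0..n. of_nat (n choose i) * (deriv ^^ i) f x * (deriv ^^ (n - i)) g x)"
proof -
  have FG: "(\<lambda>z. F z * G z) holomorphic_on S"
    using assms by (auto intro: holomorphic_on_mult)
  have "complex_of_real ((deriv ^^ n) (\<lambda>t. f t * g t) x) = (deriv ^^ n) (\<lambda>z. F z * G z) (of_real x)"
    by (rule sym, rule higher_deriv_of_real[OF FG \<open>open S\<close> \<open>open T\<close> TS])
       (simp_all add: F_f G_g \<open>x \<in> T\<close>)
  also have "\<dots> = (\<Sum>i=0..n. of_nat (n choose i) * (deriv ^^ i) F (of_real x) * (deriv ^^ (n - i)) G (of_real x))"
    using assms by (intro higher_deriv_mult) auto
  also have "\<dots> = of_real (\<Sum>i=0..n. of_nat (n choose i) * (deriv ^^ i) f x * (deriv ^^ (n - i)) g x)"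
    using assms by (simp add: higher_deriv_of_real[where S=S and T=T])
  finally show ?thesis
    using of_real_eq_iff by blast
qed

lemma poly_map_poly_of_real: "poly (map_poly of_real p) (of_real x) = of_real (poly p x)"
  by (induction p) (auto simp: map_poly_pCons)

lemma gamma_powr_holomorphic_extension:
  assumes "h > 0" and "poly \<rho> 0 / poly \<sigma> 0 > 0"
  obtains S :: "complex set" and T :: "real set" and F :: "real \<Rightarrow> complex \<Rightarrow> complex"
  where "open S" "open T" "0 \<in> T" "\<And>t. t \<in> T \<Longrightarrow> complex_of_real t \<in> S"
    and "\<And>c. F c holomorphic_on S"
    and "\<And>c t. t \<in> T \<Longrightarrow> F c (of_real t) = of_real ((gamma_fun \<rho> \<sigma> t / h) powr c)"
proof
  define \<Gamma> :: "complex \<Rightarrow> complex" where "\<Gamma> z = poly (map_poly of_real \<rho>) z / poly (map_poly of_real \<sigma>) z / of_real h" for z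
  define A :: "complex set" where "A = {z. poly (map_poly of_real \<sigma>) z \<noteq> 0}"
  define S where "S = A \<inter> \<Gamma> -` {w. 0 < Re w}"
  have \<Gamma>_real: "\<Gamma> (of_real t) = of_real (gamma_fun \<rho> \<sigma> t / h)" for t
    by (simp add: \<Gamma>_def gamma_fun_def poly_map_poly_of_real)
  have "open A"
    unfolding A_def by (intro open_Collect_neq continuous_intros)
  then show "open S"
    unfolding S_def \<Gamma>_def A_def using \<open>h > 0\<close>
    by (intro continuous_open_preimage open_halfspace_Re_gt continuous_intros) auto
  show "open (of_real -` S :: real set)"
    using \<open>open S\<close> by (intro continuous_imp_open_vimage continuous_intros) auto
  have "poly \<sigma> 0 \<noteq> 0" "gamma_fun \<rho> \<sigma> 0 / h > 0"
    using assms by (auto simp: gamma_fun_def simp flip: divide_divide_eq_left)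
  then show "0 \<in> of_real -` S"
    by (simp add: S_def A_def \<Gamma>_real poly_map_poly_of_real)
  show "of_real t \<in> S" if "t \<in> of_real -` S" for t
    using that by simp
  show "(\<lambda>z. \<Gamma> z powr of_real c) holomorphic_on S" for c
    unfolding S_def A_def \<Gamma>_def using \<open>h > 0\<close>
    by (intro holomorphic_intros poly_holomorphic_on) (auto simp: nonpos_Reals_def Reals_def)
  show "\<Gamma> (of_real t) powr of_real c = of_real ((gamma_fun \<rho> \<sigma> t / h) powr c)"
    if "t \<in> of_real -` S" for c t
    using that powr_of_real[of "gamma_fun \<rho> \<sigma> t / h" c] by (simp add: S_def \<Gamma>_real)
qed

lemma omega_add:
  assumes "h > 0" and "poly \<rho> 0 / poly \<sigma> 0 > 0"
  shows "omega \<rho> \<sigma> h (a + b) n = (\<Sum>i=0..n. omega \<rho> \<sigma> h a i * omega \<rho> \<sigma> h b (n - i))"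
proof -
  obtain S T F where S: "open S" and T: "open T" "0 \<in> T"
    and TS: "\<And>t. t \<in> T \<Longrightarrow> complex_of_real t \<in> S"
    and hol: "\<And>c. F c holomorphic_on S"
    and F_real: "\<And>c t. t \<in> T \<Longrightarrow> F c (of_real t) = of_real ((gamma_fun \<rho> \<sigma> t / h) powr c)"
    using gamma_powr_holomorphic_extension[OF assms] by blast
  define f where "f c t = (gamma_fun \<rho> \<sigma> t / h) powr (- c)" for c t
  have "f (a + b) = (\<lambda>t. f a t * f b t)"
    by (auto simp: f_def powr_add[symmetric])
  then have "(deriv ^^ n) (f (a + b)) 0
      = (\<Sum>i=0..n. of_nat (n choose i) * (deriv ^^ i) (f a) 0 * (deriv ^^ (n - i)) (f b) 0)"
    by (simp only:) (rule higher_deriv_mult_of_real[OF hol hol S T(1) TS _ _ T(2)];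
        simp add: F_real f_def)
  then show ?thesis
    by (simp add: omega_def f_def[abs_def] sum_divide_distrib binomial_fact)
qed

lemma Jminus_Jminus:
  assumes "h > 0" and "poly \<rho> 0 / poly \<sigma> 0 > 0"
  shows "Jminus \<rho> \<sigma> h b (Jminus \<rho> \<sigma> h a x) k = Jminus \<rho> \<sigma> h (a + b) x k"
  unfolding Jminus_Jminus_conv omega_add[OF assms, of b a, symmetric]
  by (simp add: Jminus_def add.commute)

lemma sum_Jminus_inner_Jplus:
  assumes "h > 0" and "poly \<rho> 0 / poly \<sigma> 0 > 0"
  shows "(\<Sum>k=0..N. Jminus \<rho> \<sigma> h a u k \<bullet> Jplus \<rho> \<sigma> h N b v k)
           = (\<Sum>k=0..N. Jminus \<rho> \<sigma> h (a + b) u k \<bullet> v k)"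
  by (simp add: sum_inner_Jplus Jminus_Jminus[OF assms])

lemma Jminus_add_scaleR:
  "Jminus \<rho> \<sigma> h a (\<lambda>k. x k + \<epsilon> *\<^sub>R dx k) k = Jminus \<rho> \<sigma> h a x k + \<epsilon> *\<^sub>R Jminus \<rho> \<sigma> h a dx k"
  by (simp add: Jminus_def scaleR_add_right sum.distrib scaleR_sum_right mult.commute)

lemma Jplus_add_scaleR:
  "Jplus \<rho> \<sigma> h N a (\<lambda>k. y k + \<epsilon> *\<^sub>R dy k) k = Jplus \<rho> \<sigma> h N a y k + \<epsilon> *\<^sub>R Jplus \<rho> \<sigma> h N a dy k"
  by (simp add: Jplus_def scaleR_add_right sum.distrib scaleR_sum_right mult.commute)

lemma has_real_derivative_along_line:
  fixes L :: "'a::real_inner \<Rightarrow> 'b::real_inner \<Rightarrow> real"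
  assumes "((\<lambda>p. L (fst p) (snd p)) has_derivative (\<lambda>q. D1 \<bullet> fst q + D2 \<bullet> snd q)) (at (u, v))"
  shows "((\<lambda>\<epsilon>. L (u + \<epsilon> *\<^sub>R du) (v + \<epsilon> *\<^sub>R dv)) has_real_derivative (D1 \<bullet> du + D2 \<bullet> dv)) (at 0)"
proof -
  have "((\<lambda>\<epsilon>::real. (u + \<epsilon> *\<^sub>R du, v + \<epsilon> *\<^sub>R dv)) has_derivative (\<lambda>t. (t *\<^sub>R du, t *\<^sub>R dv))) (at 0)"
    by (auto intro!: derivative_eq_intros)
  moreover have "((\<lambda>p. L (fst p) (snd p)) has_derivative (\<lambda>q. D1 \<bullet> fst q + D2 \<bullet> snd q))
      (at ((\<lambda>\<epsilon>::real. (u + \<epsilon> *\<^sub>R du, v + \<epsilon> *\<^sub>R dv)) 0))"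
    using assms by simp
  ultimately have "((\<lambda>\<epsilon>. L (u + \<epsilon> *\<^sub>R du) (v + \<epsilon> *\<^sub>R dv)) has_derivative (\<lambda>t. (D1 \<bullet> du + D2 \<bullet> dv) * t)) (at 0)"
    by (auto dest: has_derivative_compose simp: algebra_simps)
  then show ?thesis
    by (simp add: has_field_derivative_def)
qed

lemma has_real_derivative_inner_line:
  fixes a b c d :: "'a::real_inner"
  shows "((\<lambda>\<epsilon>. (a + \<epsilon> *\<^sub>R b) \<bullet> (c + \<epsilon> *\<^sub>R d)) has_real_derivative (b \<bullet> c + a \<bullet> d)) (at 0)"
proof -
  have "(\<lambda>\<epsilon>. (a + \<epsilon> *\<^sub>R b) \<bullet> (c + \<epsilon> *\<^sub>R d)) = (\<lambda>\<epsilon>. a \<bullet> c + \<epsilon> * (b \<bullet> c + a \<bullet> d) + \<epsilon> * \<epsilon> * (b \<bullet> d))"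
    by (auto simp: inner_add_left inner_add_right algebra_simps)
  then show ?thesis
    by (auto intro!: derivative_eq_intros)
qed

lemma action_variation_derivative:
  fixes L :: "'a::euclidean_space \<Rightarrow> 'a \<Rightarrow> real"
  assumes L_deriv: "\<And>u v. ((\<lambda>p. L (fst p) (snd p)) has_derivative
                     (\<lambda>q. D1 u v \<bullet> fst q + D2 u v \<bullet> snd q)) (at (u, v))"
  shows "((\<lambda>\<epsilon>. action L \<rho> \<sigma> h N \<mu> \<alpha> \<beta> (\<lambda>k. x k + \<epsilon> *\<^sub>R dx k) (\<lambda>k. y k + \<epsilon> *\<^sub>R dy k))
    has_real_derivative
      (\<Sum>k<N. D1 (x k) (x (Suc k)) \<bullet> dx k + D2 (x k) (x (Suc k)) \<bullet> dx (Suc k))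
      + (\<Sum>k<N. D1 (y k) (y (Suc k)) \<bullet> dy k + D2 (y k) (y (Suc k)) \<bullet> dy (Suc k))
      - \<mu> * h * ((\<Sum>k=0..N. Jminus \<rho> \<sigma> h (- \<alpha>) dx k \<bullet> Jplus \<rho> \<sigma> h N (- \<beta>) y k)
                 + (\<Sum>k=0..N. Jminus \<rho> \<sigma> h (- \<alpha>) x k \<bullet> Jplus \<rho> \<sigma> h N (- \<beta>) dy k))) (at 0)"
proof -
  have "((\<lambda>\<epsilon>. action L \<rho> \<sigma> h N \<mu> \<alpha> \<beta> (\<lambda>k. x k + \<epsilon> *\<^sub>R dx k) (\<lambda>k. y k + \<epsilon> *\<^sub>R dy k))
    has_real_derivative
      (\<Sum>k<N. D1 (x k) (x (Suc k)) \<bullet> dx k + D2 (x k) (x (Suc k)) \<bullet> dx (Suc k)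
             + (D1 (y k) (y (Suc k)) \<bullet> dy k + D2 (y k) (y (Suc k)) \<bullet> dy (Suc k)))
      - \<mu> * h * (\<Sum>k=0..N. Jminus \<rho> \<sigma> h (- \<alpha>) dx k \<bullet> Jplus \<rho> \<sigma> h N (- \<beta>) y k
                          + Jminus \<rho> \<sigma> h (- \<alpha>) x k \<bullet> Jplus \<rho> \<sigma> h N (- \<beta>) dy k)) (at 0)"
    unfolding action_def Jminus_add_scaleR Jplus_add_scaleR
    by (intro DERIV_diff DERIV_sum DERIV_add DERIV_cmult has_real_derivative_along_line[OF L_deriv]
        has_real_derivative_inner_line)
  then show ?thesis
    by (simp only: sum.distrib)
qed

lemma sum_inner_by_parts:
  fixes P Q E dx :: "nat \<Rightarrow> 'a::real_inner"
  assumes "dx 0 = 0" "dx N = 0"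
    and "\<And>k. 1 \<le> k \<Longrightarrow> k \<le> N - 1 \<Longrightarrow> P k + Q (k - 1) = E k"
  shows "(\<Sum>k<N. P k \<bullet> dx k + Q k \<bullet> dx (Suc k)) = (\<Sum>k=0..N. E k \<bullet> dx k)"
proof -
  have P: "(\<Sum>k<N. P k \<bullet> dx k) = (\<Sum>k=0..N. P k \<bullet> dx k)"
    using \<open>dx N = 0\<close> by (simp add: atLeast0AtMost lessThan_Suc_atMost[symmetric])
  have Q: "(\<Sum>k<N. Q k \<bullet> dx (Suc k)) = (\<Sum>k=0..N. Q (k - 1) \<bullet> dx k)"
    using \<open>dx 0 = 0\<close>
    by (cases N) (simp_all add: sum.atLeast0_atMost_Suc_shift sum.atLeast_Suc_atMost sum.atLeast1_atMost_eq)
  have "(\<Sum>k<N. P k \<bullet> dx k + Q k \<bullet> dx (Suc k)) = (\<Sum>k=0..N. (P k + Q (k - 1)) \<bullet> dx k)"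
    by (simp add: sum.distrib inner_add_left P Q)
  also have "\<dots> = (\<Sum>k=0..N. E k \<bullet> dx k)"
  proof (rule sum.cong[OF refl])
    fix k assume "k \<in> {0..N}"
    then show "(P k + Q (k - 1)) \<bullet> dx k = E k \<bullet> dx k"
      using assms by (cases "k = 0 \<or> k = N") auto
  qed
  finally show ?thesis .
qed

lemma sum_Euler_Lagrange_variation:
  fixes x dx J :: "nat \<Rightarrow> 'a::real_inner"
  assumes "dx 0 = 0" "dx N = 0"
    and "\<And>k. 1 \<le> k \<Longrightarrow> k \<le> N - 1 \<Longrightarrow> D1 (x k) (x (k + 1)) + D2 (x (k - 1)) (x k) = c *\<^sub>R J k"
  shows "(\<Sum>k<N. D1 (x k) (x (Suc k)) \<bullet> dx k + D2 (x k) (x (Suc k)) \<bullet> dx (Suc k))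
           = c * (\<Sum>k=0..N. J k \<bullet> dx k)"
proof -
  have "(\<Sum>k<N. D1 (x k) (x (Suc k)) \<bullet> dx k + D2 (x k) (x (Suc k)) \<bullet> dx (Suc k))
      = (\<Sum>k=0..N. (c *\<^sub>R J k) \<bullet> dx k)"
    using assms by (intro sum_inner_by_parts) simp_all
  then show ?thesis
    by (simp add: sum_distrib_left)
qed

theorem theorem4p2:
  fixes L :: "'a::euclidean_space \<Rightarrow> 'a \<Rightarrow> real"
    and D1 D2 :: "'a \<Rightarrow> 'a \<Rightarrow> 'a"
    and \<rho> \<sigma> :: "real poly"
    and h \<mu> \<alpha> \<beta> :: real and N :: nat
    and x y dx :: "nat \<Rightarrow> 'a"
  assumes h_pos: "h > 0" and mu_pos: "\<mu> > 0"
    and alpha: "0 \<le> \<alpha>" "\<alpha> \<le> 1/2" and beta: "0 \<le> \<beta>" "\<beta> \<le> 1/2"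
    and gamma0: "poly \<rho> 0 / poly \<sigma> 0 > 0"
    and L_deriv: "\<And>u v. ((\<lambda>p. L (fst p) (snd p)) has_derivative
                     (\<lambda>q. D1 u v \<bullet> fst q + D2 u v \<bullet> snd q)) (at (u, v))"
    and D1_cont: "continuous_on UNIV (\<lambda>p. D1 (fst p) (snd p))"
    and D2_cont: "continuous_on UNIV (\<lambda>p. D2 (fst p) (snd p))"
    and EL_x: "\<And>k. 1 \<le> k \<Longrightarrow> k \<le> N - 1 \<Longrightarrow>
       D1 (x k) (x (k + 1)) + D2 (x (k - 1)) (x k) = (\<mu> * h) *\<^sub>R Jminus \<rho> \<sigma> h (- (\<alpha> + \<beta>)) x k"
    and EL_y: "\<And>k. 1 \<le> k \<Longrightarrow> k \<le> N - 1 \<Longrightarrow>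
       D1 (y k) (y (k + 1)) + D2 (y (k - 1)) (y k) = (\<mu> * h) *\<^sub>R Jplus \<rho> \<sigma> h N (- (\<alpha> + \<beta>)) y k"
    and dx0: "dx 0 = 0" and dxN: "dx N = 0"
  shows "((\<lambda>\<epsilon>. action L \<rho> \<sigma> h N \<mu> \<alpha> \<beta> (\<lambda>k. x k + \<epsilon> *\<^sub>R dx k) (\<lambda>k. y k + \<epsilon> *\<^sub>R dx k))
           has_real_derivative 0) (at 0)"
proof -
  let ?Jx = "Jminus \<rho> \<sigma> h (- (\<alpha> + \<beta>)) x" and ?Jy = "Jplus \<rho> \<sigma> h N (- (\<alpha> + \<beta>)) y"
  have sum_Jminus_Jplus: "(\<Sum>k=0..N. Jminus \<rho> \<sigma> h (- \<alpha>) u k \<bullet> Jplus \<rho> \<sigma> h N (- \<beta>) v k)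
      = (\<Sum>k=0..N. Jminus \<rho> \<sigma> h (- (\<alpha> + \<beta>)) u k \<bullet> v k)" for u v :: "nat \<Rightarrow> 'a"
    using sum_Jminus_inner_Jplus[OF h_pos gamma0, of "- \<alpha>" u N "- \<beta>" v] by simp
  have "(\<Sum>k=0..N. Jminus \<rho> \<sigma> h (- \<alpha>) dx k \<bullet> Jplus \<rho> \<sigma> h N (- \<beta>) y k)
      = (\<Sum>k=0..N. ?Jy k \<bullet> dx k)"
    by (subst (2) inner_commute, subst sum_Jminus_Jplus) (rule sum_inner_Jplus[symmetric])
  with action_variation_derivative[OF L_deriv, of \<rho> \<sigma> h N \<mu> \<alpha> \<beta> x dx y dx]
  have "((\<lambda>\<epsilon>. action L \<rho> \<sigma> h N \<mu> \<alpha> \<beta> (\<lambda>k. x k + \<epsilon> *\<^sub>R dx k) (\<lambda>k. y k + \<epsilon> *\<^sub>R dx k))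
    has_real_derivative \<mu> * h * (\<Sum>k=0..N. ?Jx k \<bullet> dx k) + \<mu> * h * (\<Sum>k=0..N. ?Jy k \<bullet> dx k)
      - \<mu> * h * ((\<Sum>k=0..N. ?Jy k \<bullet> dx k) + (\<Sum>k=0..N. ?Jx k \<bullet> dx k))) (at 0)"
    by (simp only: sum_Euler_Lagrange_variation[where J = ?Jx, OF dx0 dxN EL_x]
        sum_Euler_Lagrange_variation[where J = ?Jy, OF dx0 dxN EL_y] sum_Jminus_Jplus)
  then show ?thesis
    by (simp add: algebra_simps)
qed

end
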